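(* Consider the finite game with players $\mathcal{M}=\{1,\dots,M\}$, common action set $\mathcal{N}$ and tolled costs $\bar c_i(\mathbf{a})=\sum_{l\in\mathcal{M}_{a_i}(\mathbf{a})}\frac{\sigma^2}{h_{la_i}}\frac{\beta_l}{[1-S_i(\mathbf{a})]^+}-\sum_{l\in\mathcal{M}_{a_i}(\mathbf{a})\setminus\{i\}}\frac{\sigma^2}{h_{la_i}}\frac{\beta_l}{[1-S_i(\mathbf{a})+\beta_i]^+}$, where $S_i(\mathbf{a})=\sum_{k\in\mathcal{M}_{a_i}(\mathbf{a})}\beta_k$, and suppose $h_{ij}=h_j$ and $\beta_i=\beta$ for all $i\in\mathcal{M}$, $j\in\mathcal{N}$. Then every Nash equilibrium of this game is system optimal, i.e., minimizes $C(\mathbf{a})=\sum_{i\in\mathcal{M}}\frac{\sigma^2}{h_{ia_i}}\frac{\beta_i}{[1-S_i(\mathbf{a})]^+}$ over all $\mathbf{a}\in\mathcal{N}^M$.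
   Context: Uplink cellular model: mobiles $\mathcal{M}=\{1,\dots,M\}$, BSs $\mathcal{N}=\{1,\dots,N\}$, power gains $h_{ij}>0$, noise power $\sigma^2>0$, target SINRs $\gamma_i>0$, $\beta_i=\gamma_i/(1+\gamma_i)$. Association profile $\mathbf{a}\in\mathcal{N}^M$, $\mathcal{M}_j(\mathbf{a})=\{l: a_l=j\}$, $[x]^+=\max(x,0)$, positive$/0=+\infty$, and $\bar c_i(\mathbf{a})=+\infty$ whenever its first sum is infinite. $(b,\mathbf{a}_{-i})$ replaces $a_i$ by $b$. $\mathbf{a}$ is a Nash equilibrium if $a_i\in\arg\min_{b\in\mathcal{N}}\bar c_i(b,\mathbf{a}_{-i})$ for all $i$. Standing assumption: there exists at least one feasible association, i.e. some $\mathbf{a}$ with $\sum_{l\in\mathcal{M}_j(\mathbf{a})}\beta_l<1$ for all $j$. *)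

theory Defs
  imports "HOL-Analysis.Analysis"
begin

text \<open>Players are the elements of a finite type 'm, base stations those of a finite
type 'n; an association profile is a function a :: 'm => 'n.\<close>

definition pos_part :: "real \<Rightarrow> real" where
  "pos_part x = max x 0"

text \<open>Division with the convention positive / 0 = +infinity (numerators used are positive).\<close>
definition pdiv :: "real \<Rightarrow> real \<Rightarrow> ereal" where
  "pdiv x y = (if y = 0 then \<infinity> else ereal (x / y))"

definition beta :: "('m \<Rightarrow> real) \<Rightarrow> 'm \<Rightarrow> real" where
  "beta gamma i = gamma i / (1 + gamma i)"

definition Mset :: "('m \<Rightarrow> 'n) \<Rightarrow> 'n \<Rightarrow> 'm set" where
  "Mset a j = {l. a l = j}"

definition Sload :: "('m \<Rightarrow> real) \<Rightarrow> ('m \<Rightarrow> 'n) \<Rightarrow> 'm \<Rightarrow> real" where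
  "Sload gamma a i = (\<Sum>k\<in>Mset a (a i). beta gamma k)"

definition feasible :: "('m \<Rightarrow> real) \<Rightarrow> ('m \<Rightarrow> 'n) \<Rightarrow> bool" where
  "feasible gamma a \<longleftrightarrow> (\<forall>j. (\<Sum>l\<in>Mset a j. beta gamma l) < 1)"

definition cbar :: "('m \<Rightarrow> 'n \<Rightarrow> real) \<Rightarrow> real \<Rightarrow> ('m \<Rightarrow> real) \<Rightarrow> 'm \<Rightarrow> ('m \<Rightarrow> 'n) \<Rightarrow> ereal" where
  "cbar h sigma2 gamma i a =
    (let j = a i; S = Sload gamma a i;
         first = (\<Sum>l\<in>Mset a j. pdiv (sigma2 / h l j * beta gamma l) (pos_part (1 - S)));
         second = (\<Sum>l\<in>Mset a j - {i}. pdiv (sigma2 / h l j * beta gamma l) (pos_part (1 - S + beta gamma i)))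
     in if first = \<infinity> then \<infinity> else first - second)"

definition nash_eq :: "('m \<Rightarrow> 'n \<Rightarrow> real) \<Rightarrow> real \<Rightarrow> ('m \<Rightarrow> real) \<Rightarrow> ('m \<Rightarrow> 'n) \<Rightarrow> bool" where
  "nash_eq h sigma2 gamma a \<longleftrightarrow>
     (\<forall>i b. cbar h sigma2 gamma i a \<le> cbar h sigma2 gamma i (a(i := b)))"

definition Ccost :: "('m::finite \<Rightarrow> 'n \<Rightarrow> real) \<Rightarrow> real \<Rightarrow> ('m \<Rightarrow> real) \<Rightarrow> ('m \<Rightarrow> 'n) \<Rightarrow> ereal" where
  "Ccost h sigma2 gamma a =
     (\<Sum>i\<in>UNIV. pdiv (sigma2 / h i (a i) * beta gamma i) (pos_part (1 - Sload gamma a i)))"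

end

theory Submission
  imports Defs
begin

text \<open>With identical gains per station and identical targets, every cost depends on the
profile only through the station loads \<open>n\<^sub>j\<close>: the social cost is \<open>\<Sum>\<^sub>j G\<^sub>j(n\<^sub>j)\<close> with
\<open>G\<^sub>j(k) = k c\<^sub>j / (1 - k \<beta>)\<close>, and the tolled cost of a user at \<open>j\<close> is the marginal cost
\<open>G\<^sub>j(n\<^sub>j) - G\<^sub>j(n\<^sub>j - 1)\<close>. Each \<open>G\<^sub>j\<close> is convex on the admissible loads, an equilibrium has
admissible loads, and at an equilibrium no marginal cost of leaving a station exceeds a
marginal cost of joining another. A threshold \<open>t\<close> separating these two families of marginal
costs then shows, station by station, \<open>G\<^sub>j(m\<^sub>j) - G\<^sub>j(n\<^sub>j) \<ge> (m\<^sub>j - n\<^sub>j) t\<close> for any other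
admissible load vector \<open>m\<close>; since both load vectors sum to \<open>M\<close>, summing gives optimality.\<close>

lemma increment_mono:
  fixes f :: "nat \<Rightarrow> real"
  assumes down: "\<And>k k'. k' \<le> k \<Longrightarrow> P k \<Longrightarrow> P k'"
    and convex: "\<And>k. P (Suc (Suc k)) \<Longrightarrow> f (Suc k) - f k \<le> f (Suc (Suc k)) - f (Suc k)"
    and "n \<le> k" and "P (Suc k)"
  shows "f (Suc n) - f n \<le> f (Suc k) - f k"
  using \<open>n \<le> k\<close> \<open>P (Suc k)\<close>
proof (induction k rule: dec_induct)
  case (step k)
  have "f (Suc n) - f n \<le> f (Suc k) - f k"
    using step.IH down[OF _ step.prems] by simp
  also have "\<dots> \<le> f (Suc (Suc k)) - f (Suc k)"
    using convex step.prems by simp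
  finally show ?case .
qed simp

lemma convex_diff_bounds:
  fixes f :: "nat \<Rightarrow> real"
  assumes down: "\<And>k k'. k' \<le> k \<Longrightarrow> P k \<Longrightarrow> P k'"
    and convex: "\<And>k. P (Suc (Suc k)) \<Longrightarrow> f (Suc k) - f k \<le> f (Suc (Suc k)) - f (Suc k)"
    and "n \<le> m" and "P m"
  shows "(real m - real n) * (f (Suc n) - f n) \<le> f m - f n"
    and "f m - f n \<le> (real m - real n) * (f m - f (m - 1))"
proof -
  have telescope: "(\<Sum>k = n..<m. f (Suc k) - f k) = f m - f n"
    by (rule sum_Suc_diff'[OF \<open>n \<le> m\<close>])
  have mono: "f (Suc k) - f k \<le> f (Suc k') - f k'" if "k \<le> k'" "k' < m" for k k'
    using increment_mono[where P=P and f=f, OF down convex \<open>k \<le> k'\<close>] down[OF _ \<open>P m\<close>] that by simp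
  have const_sum: "(\<Sum>k = n..<m. c) = (real m - real n) * c" for c
    using \<open>n \<le> m\<close> by (simp add: of_nat_diff)
  have "(\<Sum>k = n..<m. f (Suc n) - f n) \<le> (\<Sum>k = n..<m. f (Suc k) - f k)"
    by (intro sum_mono mono) auto
  then show "(real m - real n) * (f (Suc n) - f n) \<le> f m - f n"
    by (simp only: telescope const_sum)
  have upper: "(\<Sum>k = n..<m. f (Suc k) - f k) \<le> (\<Sum>k = n..<m. f (Suc (m - 1)) - f (m - 1))"
    by (intro sum_mono mono) auto
  show "f m - f n \<le> (real m - real n) * (f m - f (m - 1))"
  proof (cases "n < m")
    case True
    then have "Suc (m - 1) = m" by simp
    with upper show ?thesis by (simp only: telescope const_sum)
  qed (use \<open>n \<le> m\<close> in simp)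
qed

lemma finite_sets_separated:
  fixes A B :: "real set"
  assumes "finite A" "finite B" "\<And>x y. x \<in> A \<Longrightarrow> y \<in> B \<Longrightarrow> x \<le> y"
  shows "\<exists>t. (\<forall>x\<in>A. x \<le> t) \<and> (\<forall>y\<in>B. t \<le> y)"
proof (cases "A = {}")
  case True
  then show ?thesis by (metis assms(2) Min_le empty_iff)
next
  case False
  then show ?thesis using assms by (metis Max_ge Max_in)
qed

lemma separable_convex_min:
  fixes g :: "'n::finite \<Rightarrow> nat \<Rightarrow> real" and n m :: "'n \<Rightarrow> nat"
  assumes down: "\<And>k k'. k' \<le> k \<Longrightarrow> P k \<Longrightarrow> P k'"
    and convex: "\<And>j k. P (Suc (Suc k)) \<Longrightarrow> g j (Suc k) - g j k \<le> g j (Suc (Suc k)) - g j (Suc k)"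
    and Pn: "\<And>j. P (n j)" and Pm: "\<And>j. P (m j)"
    and same_total: "(\<Sum>j\<in>UNIV. n j) = (\<Sum>j\<in>UNIV. m j)"
    and no_move: "\<And>j b. 1 \<le> n j \<Longrightarrow> b \<noteq> j \<Longrightarrow> P (Suc (n b)) \<Longrightarrow>
                   g j (n j) - g j (n j - 1) \<le> g b (Suc (n b)) - g b (n b)"
  shows "(\<Sum>j\<in>UNIV. g j (n j)) \<le> (\<Sum>j\<in>UNIV. g j (m j))"
proof -
  define A where "A = (\<lambda>j. g j (n j) - g j (n j - 1)) ` {j. m j < n j}"
  define B where "B = (\<lambda>j. g j (Suc (n j)) - g j (n j)) ` {j. n j < m j}"
  have "\<exists>t. (\<forall>x\<in>A. x \<le> t) \<and> (\<forall>y\<in>B. t \<le> y)"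
  proof (rule finite_sets_separated)
    fix x y assume "x \<in> A" "y \<in> B"
    then obtain j b where "m j < n j" "x = g j (n j) - g j (n j - 1)"
      and "n b < m b" "y = g b (Suc (n b)) - g b (n b)"
      unfolding A_def B_def by auto
    moreover have "P (Suc (n b))" using down[OF _ Pm[of b]] \<open>n b < m b\<close> by simp
    ultimately show "x \<le> y" using no_move[of j b] by fastforce
  qed (auto simp: A_def B_def)
  then obtain t where tA: "\<And>x. x \<in> A \<Longrightarrow> x \<le> t" and tB: "\<And>y. y \<in> B \<Longrightarrow> t \<le> y" by blast
  have station: "(real (m j) - real (n j)) * t \<le> g j (m j) - g j (n j)" for j
  proof (cases "m j" "n j" rule: linorder_cases)
    case less
    then have "g j (n j) - g j (n j - 1) \<le> t" using tA unfolding A_def by auto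
    with less have "(real (n j) - real (m j)) * (g j (n j) - g j (n j - 1))
        \<le> (real (n j) - real (m j)) * t"
      by (intro mult_left_mono) auto
    moreover have "g j (n j) - g j (m j) \<le> (real (n j) - real (m j)) * (g j (n j) - g j (n j - 1))"
      using convex_diff_bounds(2)[where P=P and f="g j", OF down convex[where j=j]] less Pn by simp
    ultimately show ?thesis by (simp add: algebra_simps)
  next
    case greater
    then have "t \<le> g j (Suc (n j)) - g j (n j)" using tB unfolding B_def by auto
    with greater have "(real (m j) - real (n j)) * t
        \<le> (real (m j) - real (n j)) * (g j (Suc (n j)) - g j (n j))"
      by (intro mult_left_mono) auto
    moreover have "(real (m j) - real (n j)) * (g j (Suc (n j)) - g j (n j)) \<le> g j (m j) - g j (n j)"
      using convex_diff_bounds(1)[where P=P and f="g j", OF down convex[where j=j]] greater Pm by simp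
    ultimately show ?thesis by linarith
  qed simp
  have "0 = (real (\<Sum>j\<in>UNIV. m j) - real (\<Sum>j\<in>UNIV. n j)) * t"
    using same_total by simp
  also have "\<dots> = (\<Sum>j\<in>UNIV. (real (m j) - real (n j)) * t)"
    by (simp add: sum_subtractf sum_distrib_right[symmetric])
  also have "\<dots> \<le> (\<Sum>j\<in>UNIV. g j (m j) - g j (n j))"
    by (rule sum_mono) (rule station)
  finally show ?thesis by (simp add: sum_subtractf)
qed

definition load_cost :: "real \<Rightarrow> real \<Rightarrow> nat \<Rightarrow> real" where
  "load_cost b c k = real k * c / (1 - real k * b)"

lemma load_cost_increment:
  assumes "real (Suc k) * b < 1" "0 < b"
  shows "load_cost b c (Suc k) - load_cost b c k = c / ((1 - real k * b) * (1 - real (Suc k) * b))"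
proof -
  have "1 - real k * b > 0" "1 - real (Suc k) * b > 0"
    using assms by (auto simp: algebra_simps)
  then show ?thesis unfolding load_cost_def by (simp add: field_simps)
qed

lemma load_cost_increment_mono:
  assumes "real (Suc (Suc k)) * b < 1" "0 < b" "0 \<le> c"
  shows "load_cost b c (Suc k) - load_cost b c k
           \<le> load_cost b c (Suc (Suc k)) - load_cost b c (Suc k)"
proof -
  have "real (Suc k) * b < 1" using assms by (simp add: algebra_simps)
  then have pos: "1 - real k * b > 0" "1 - real (Suc k) * b > 0" "1 - real (Suc (Suc k)) * b > 0"
    using assms by (auto simp: algebra_simps)
  have "1 - real (Suc (Suc k)) * b \<le> 1 - real k * b"
    using \<open>0 < b\<close> by (simp add: mult_right_mono)
  from mult_left_mono[OF this, of "1 - real (Suc k) * b"] pos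
  have "(1 - real (Suc k) * b) * (1 - real (Suc (Suc k)) * b) \<le> (1 - real k * b) * (1 - real (Suc k) * b)"
    by (simp add: mult.commute)
  then have "c / ((1 - real k * b) * (1 - real (Suc k) * b))
               \<le> c / ((1 - real (Suc k) * b) * (1 - real (Suc (Suc k)) * b))"
    using pos assms by (intro divide_left_mono) auto
  then show ?thesis
    using load_cost_increment[OF \<open>real (Suc k) * b < 1\<close> \<open>0 < b\<close>] load_cost_increment[OF assms(1,2)]
    by simp
qed

lemma sum_card_Mset:
  fixes x :: "'m::finite \<Rightarrow> 'n::finite"
  shows "(\<Sum>j\<in>UNIV. card (Mset x j)) = CARD('m)"
proof -
  have "(\<Sum>j\<in>UNIV. card (Mset x j)) = (\<Sum>j\<in>UNIV. \<Sum>i\<in>{i. i \<in> UNIV \<and> x i = j}. 1)"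
    unfolding Mset_def by simp
  also have "\<dots> = (\<Sum>i\<in>(UNIV::'m set). 1)"
    by (rule sum.group) auto
  finally show ?thesis by simp
qed

lemma card_Mset_update:
  fixes x :: "'m::finite \<Rightarrow> 'n"
  assumes "b \<noteq> x i"
  shows "card (Mset (x(i := b)) b) = Suc (card (Mset x b))"
proof -
  have "Mset (x(i := b)) b = insert i (Mset x b)" "i \<notin> Mset x b"
    using assms unfolding Mset_def by auto
  then show ?thesis by simp
qed

lemma occupied_station: "1 \<le> card (Mset x j) \<Longrightarrow> \<exists>i. x i = j"
  unfolding Mset_def by (metis (mono_tags, lifting) Collect_empty_eq card.empty not_one_le_zero)

locale homogeneous_uplink =
  fixes h :: "'m::finite \<Rightarrow> 'n::finite \<Rightarrow> real" and sigma2 :: real and gamma :: "'m \<Rightarrow> real"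
    and bb :: real and hh :: "'n \<Rightarrow> real"
  assumes beta_const: "\<And>l. beta gamma l = bb"
    and h_const: "\<And>l j. h l j = hh j"
    and bb_pos: "0 < bb"
    and hh_pos: "\<And>j. 0 < hh j"
    and sigma2_pos: "0 < sigma2"
begin

abbreviation admissible :: "nat \<Rightarrow> bool" where
  "admissible k \<equiv> real k * bb < 1"

abbreviation station_cost :: "'n \<Rightarrow> nat \<Rightarrow> real" where
  "station_cost j \<equiv> load_cost bb (sigma2 / hh j * bb)"

lemma admissible_downward: "k' \<le> k \<Longrightarrow> admissible k \<Longrightarrow> admissible k'"
  using bb_pos by (meson le_less_trans mult_right_mono of_nat_le_iff less_imp_le)

lemma admissible_less: "admissible k \<Longrightarrow> \<not> admissible k' \<Longrightarrow> k < k'"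
  using admissible_downward[of k' k] by linarith

lemma station_cost_convex:
  "admissible (Suc (Suc k)) \<Longrightarrow>
     station_cost j (Suc k) - station_cost j k \<le> station_cost j (Suc (Suc k)) - station_cost j (Suc k)"
  using bb_pos hh_pos[of j] sigma2_pos by (intro load_cost_increment_mono) auto

lemma Sload_eq: "Sload gamma x i = real (card (Mset x (x i))) * bb"
  unfolding Sload_def using beta_const by simp

lemma feasible_iff: "feasible gamma x \<longleftrightarrow> (\<forall>j. admissible (card (Mset x j)))"
  unfolding feasible_def using beta_const by simp

lemma cbar_eq:
  "cbar h sigma2 gamma i x =
    (if admissible (card (Mset x (x i)))
     then ereal (station_cost (x i) (card (Mset x (x i))) - station_cost (x i) (card (Mset x (x i)) - 1))
     else \<infinity>)"
proof -
  define j where "j = x i"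
  define k where "k = card (Mset x j)"
  define c where "c = sigma2 / hh j * bb"
  have i_in: "i \<in> Mset x j" unfolding Mset_def j_def by simp
  then have "1 \<le> k" unfolding k_def by (metis One_nat_def Suc_leI card_gt_0_iff empty_iff finite)
  define first where "first = (\<Sum>l\<in>Mset x j. pdiv c (pos_part (1 - real k * bb)))"
  define second where "second = (\<Sum>l\<in>Mset x j - {i}. pdiv c (pos_part (1 - real k * bb + bb)))"
  have cbar: "cbar h sigma2 gamma i x = (if first = \<infinity> then \<infinity> else first - second)"
    unfolding cbar_def first_def second_def c_def Let_def Sload_eq
    using beta_const h_const j_def k_def by simp
  show ?thesis
  proof (cases "admissible k")
    case True
    have k_minus_1: "real (k - 1) = real k - 1" using \<open>1 \<le> k\<close> by (simp add: of_nat_diff)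
    have "first = ereal (load_cost bb c k)"
      using True unfolding first_def pos_part_def pdiv_def load_cost_def k_def by simp
    moreover have "pos_part (1 - real k * bb + bb) = 1 - real (k - 1) * bb"
      unfolding pos_part_def k_minus_1 using True bb_pos by (simp add: algebra_simps)
    moreover have "1 - real (k - 1) * bb > 0" using True bb_pos k_minus_1 by (simp add: algebra_simps)
    ultimately have "second = ereal (load_cost bb c (k - 1))" "first = ereal (load_cost bb c k)"
      unfolding second_def pdiv_def load_cost_def k_def using i_in
      by (simp_all add: card_Diff_singleton)
    then show ?thesis using True cbar unfolding k_def c_def j_def by simp
  next
    case False
    then have "first = \<infinity>"
      unfolding first_def pos_part_def pdiv_def using i_in by (auto simp add: sum_Pinfty)
    then show ?thesis using False cbar unfolding k_def c_def j_def by simp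
  qed
qed

lemma Ccost_eq_sum:
  assumes "\<And>j. admissible (card (Mset x j))"
  shows "Ccost h sigma2 gamma x = ereal (\<Sum>j\<in>UNIV. station_cost j (card (Mset x j)))"
proof -
  define \<phi> where "\<phi> j = sigma2 / hh j * bb / (1 - real (card (Mset x j)) * bb)" for j
  have "Ccost h sigma2 gamma x = (\<Sum>i\<in>UNIV. ereal (\<phi> (x i)))"
    unfolding Ccost_def
  proof (rule sum.cong)
    fix i
    show "pdiv (sigma2 / h i (x i) * beta gamma i) (pos_part (1 - Sload gamma x i)) = ereal (\<phi> (x i))"
      using assms[of "x i"] by (simp add: Sload_eq pos_part_def pdiv_def \<phi>_def beta_const h_const)
  qed simp
  also have "\<dots> = ereal (\<Sum>i\<in>UNIV. \<phi> (x i))" by simp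
  also have "(\<Sum>i\<in>UNIV. \<phi> (x i)) = (\<Sum>j\<in>UNIV. \<Sum>i\<in>{i. i \<in> UNIV \<and> x i = j}. \<phi> (x i))"
    by (rule sum.group[symmetric]) auto
  also have "\<dots> = (\<Sum>j\<in>UNIV. \<Sum>i\<in>Mset x j. \<phi> j)"
    unfolding Mset_def by (intro sum.cong) auto
  also have "\<dots> = (\<Sum>j\<in>UNIV. station_cost j (card (Mset x j)))"
    by (simp add: \<phi>_def load_cost_def)
  finally show ?thesis .
qed

lemma Ccost_infinite:
  assumes "\<not> admissible (card (Mset x j))"
  shows "Ccost h sigma2 gamma x = \<infinity>"
proof -
  have "1 \<le> card (Mset x j)" using assms by (rule contrapos_np) (simp add: Suc_le_eq)
  then obtain i where "x i = j" using occupied_station[of x j] by blast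
  then have "pos_part (1 - Sload gamma x i) = 0"
    using assms unfolding Sload_eq pos_part_def by simp
  then have "pdiv (sigma2 / h i (x i) * beta gamma i) (pos_part (1 - Sload gamma x i)) = \<infinity>"
    unfolding pdiv_def by simp
  then show ?thesis unfolding Ccost_def by (auto simp add: sum_Pinfty)
qed

lemma cbar_deviate:
  assumes "b \<noteq> x i"
  shows "cbar h sigma2 gamma i (x(i := b)) =
     (if admissible (Suc (card (Mset x b)))
      then ereal (station_cost b (Suc (card (Mset x b))) - station_cost b (card (Mset x b))) else \<infinity>)"
proof -
  have "cbar h sigma2 gamma i (x(i := b)) =
     (if admissible (card (Mset (x(i := b)) b))
      then ereal (station_cost b (card (Mset (x(i := b)) b)) - station_cost b (card (Mset (x(i := b)) b) - 1))
      else \<infinity>)"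
    using cbar_eq[of i "x(i := b)"] by (simp only: fun_upd_same)
  then show ?thesis by (simp only: card_Mset_update[of b x i, OF assms] diff_Suc_1)
qed

context
  fixes a :: "'m \<Rightarrow> 'n"
  assumes nash: "nash_eq h sigma2 gamma a"
    and feas: "\<exists>a0 :: 'm \<Rightarrow> 'n. feasible gamma a0"
begin

lemma nash_cbar_le: "cbar h sigma2 gamma i a \<le> cbar h sigma2 gamma i (a(i := b))"
  using nash unfolding nash_eq_def by blast

text \<open>A user on an overloaded station has infinite cost, so every other station must be
unable to absorb one more user; comparing with a feasible profile, the loads of \<open>a\<close> would then
add up to more than \<open>M\<close>.\<close>

lemma nash_admissible: "admissible (card (Mset a j))"
proof (rule ccontr)
  assume over: "\<not> admissible (card (Mset a j))"
  then have "1 \<le> card (Mset a j)" by (rule contrapos_np) (simp add: Suc_le_eq)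
  then obtain i where "a i = j" using occupied_station[of a j] by blast
  then have inf: "cbar h sigma2 gamma i a = \<infinity>" using cbar_eq[of i a] over by simp
  have full: "\<not> admissible (Suc (card (Mset a b)))" if "b \<noteq> j" for b
  proof
    assume "admissible (Suc (card (Mset a b)))"
    then have "cbar h sigma2 gamma i (a(i := b)) \<noteq> \<infinity>"
      using cbar_deviate[of b a i] that \<open>a i = j\<close> by simp
    with nash_cbar_le[of i b] inf show False by simp
  qed
  obtain a0 :: "'m \<Rightarrow> 'n" where "feasible gamma a0" using feas by blast
  then have adm0: "admissible (card (Mset a0 b))" for b by (simp add: feasible_iff)
  have less: "card (Mset a0 j) < card (Mset a j)"
    using admissible_less[OF adm0 over] .
  moreover have "card (Mset a0 b) \<le> card (Mset a b)" for b
  proof (cases "b = j")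
    case False
    then show ?thesis using admissible_less[OF adm0[of b] full[OF False]] by simp
  qed (use less in simp)
  ultimately have "(\<Sum>b\<in>UNIV. card (Mset a0 b)) < (\<Sum>b\<in>UNIV. card (Mset a b))"
    by (intro sum_strict_mono_ex1) auto
  then show False by (simp add: sum_card_Mset)
qed

lemma nash_no_improving_move:
  assumes "1 \<le> card (Mset a j)" "b \<noteq> j" "admissible (Suc (card (Mset a b)))"
  shows "station_cost j (card (Mset a j)) - station_cost j (card (Mset a j) - 1)
           \<le> station_cost b (Suc (card (Mset a b))) - station_cost b (card (Mset a b))"
proof -
  obtain i where "a i = j" using occupied_station[of a j] assms(1) by blast
  then show ?thesis
    using nash_cbar_le[of i b] cbar_eq[of i a] cbar_deviate[of b a i] nash_admissible[of j] assms
    by simp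
qed

lemma nash_optimal: "Ccost h sigma2 gamma a \<le> Ccost h sigma2 gamma a'"
proof (cases "\<forall>j. admissible (card (Mset a' j))")
  case True
  have "(\<Sum>j\<in>UNIV. station_cost j (card (Mset a j))) \<le> (\<Sum>j\<in>UNIV. station_cost j (card (Mset a' j)))"
  proof (rule separable_convex_min[where P = admissible and g = station_cost])
    show "(\<Sum>j\<in>UNIV. card (Mset a j)) = (\<Sum>j\<in>UNIV. card (Mset a' j))"
      by (simp only: sum_card_Mset)
  qed (use admissible_downward station_cost_convex True nash_admissible
         nash_no_improving_move in blast)+
  then show ?thesis
    using True nash_admissible by (simp add: Ccost_eq_sum)
next
  case False
  then obtain j where "\<not> admissible (card (Mset a' j))" by blast
  then show ?thesis by (simp add: Ccost_infinite)
qed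

end

end

theorem proposition15:
  fixes h :: "'m::finite \<Rightarrow> 'n::finite \<Rightarrow> real"
    and sigma2 :: real and gamma :: "'m \<Rightarrow> real"
    and a :: "'m \<Rightarrow> 'n"
  assumes h_pos: "\<And>i j. h i j > 0"
    and sigma_pos: "sigma2 > 0"
    and gamma_pos: "\<And>i. gamma i > 0"
    and feas: "\<exists>a0 :: 'm \<Rightarrow> 'n. feasible gamma a0"
    and h_hom: "\<And>i i' j. h i j = h i' j"
    and beta_hom: "\<And>i i'. beta gamma i = beta gamma i'"
    and ne: "nash_eq h sigma2 gamma a"
  shows "\<forall>a'. Ccost h sigma2 gamma a \<le> Ccost h sigma2 gamma a'"
proof -
  fix i0 :: 'm
  interpret homogeneous_uplink h sigma2 gamma "beta gamma i0" "h i0"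
  proof
    show "0 < beta gamma i0"
      unfolding beta_def using gamma_pos[of i0] by (simp add: add_pos_pos)
  qed (use beta_hom h_hom h_pos sigma_pos in auto)
  show ?thesis using nash_optimal[OF ne feas] by blast
qed

end
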